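(* Let $f:\mathbb{R}^N\to\mathbb{R}$ be continuous with $\operatorname{argmin} f\neq\emptyset$. Let $p>1$, $\mu>0$, and suppose $f$ is globally $p$-Łojasiewicz with constant $\mu$, i.e., with $\frac1p+\frac1q=1$, $$(\forall x\in\mathbb{R}^N)(\forall x^*\in\partial_L f(x))\quad f(x)-\inf f \le \frac{1}{q\,\mu^{q/p}}\|x^*\|^q.$$ Then for all $x\in\mathbb{R}^N$, $$\frac{1}{(p-1)^{p-1}}\frac{\mu}{p}\, d_{\operatorname{argmin} f}(x)^p \le f(x)-\inf f.$$
   Context: For a closed set $S\subset\mathbb{R}^N$, $d_S(x) := \inf_{y\in S}\|y-x\|$ (Euclidean norm). For $g:\mathbb{R}^N\to\mathbb{R}$, the Fréchet subdifferential $\partial_F g(x)$ is the set of $x^*$ with $\liminf_{y\to x} \frac{g(y)-g(x)-\langle x^*,y-x\rangle}{\|y-x\|}\ge 0$; the limiting subdifferential $\partial_L g(x)$ is the set of $x^*$ for which there exist $x_n\to x$ and $x_n^*\to x^*$ with $g(x_n)\to g(x)$ and $x_n^*\in\partial_F g(x_n)$. *)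

theory Defs
  imports "HOL-Analysis.Analysis" "HOL-Library.Liminf_Limsup"
begin

definition frechet_subdiff :: "('a::euclidean_space \<Rightarrow> real) \<Rightarrow> 'a \<Rightarrow> 'a set" where
  "frechet_subdiff g x = {xs. Liminf (at x)
      (\<lambda>y. ereal ((g y - g x - inner xs (y - x)) / norm (y - x))) \<ge> 0}"

definition limiting_subdiff :: "('a::euclidean_space \<Rightarrow> real) \<Rightarrow> 'a \<Rightarrow> 'a set" where
  "limiting_subdiff g x = {xs. \<exists>xn xsn. xn \<longlonglongrightarrow> x \<and> xsn \<longlonglongrightarrow> xs \<and>
      (\<lambda>n. g (xn n)) \<longlonglongrightarrow> g x \<and> (\<forall>n. xsn n \<in> frechet_subdiff g (xn n))}"

definition argmin_set :: "('a \<Rightarrow> real) \<Rightarrow> 'a set" where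
  "argmin_set f = {x. \<forall>y. f x \<le> f y}"

end

theory Submission
  imports Defs
begin

text \<open>
  Put \<open>g = f - min f\<close> and \<open>a = 1 / p\<close>. The Lojasiewicz inequality says that at points with
  \<open>g > 0\<close> every Frechet subgradient \<open>v\<close> of \<open>g\<close> has \<open>a * g powr (a - 1) * norm v \<ge> \<eta>\<close>,
  i.e. \<open>g powr a\<close> has slope at least \<open>\<eta>\<close>, where \<open>\<eta> powr p\<close> is the constant of the theorem.
  Fix \<open>x\<close> and \<open>\<delta> > 0\<close> and minimise the coercive function
  \<open>\<Phi> z = g z powr a + \<eta> * sqrt ((norm (z - x))\<^sup>2 + \<delta>\<^sup>2)\<close>, a smooth penalisation of the
  distance to \<open>x\<close>. At a minimiser \<open>y\<close> with \<open>g y > 0\<close>, the gradient of the penalty, which has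
  norm less than \<open>\<eta>\<close>, would yield a Frechet subgradient of \<open>g\<close> violating the slope bound.
  Hence \<open>g y = 0\<close>, and \<open>\<eta> * dist x (argmin f) \<le> \<Phi> y \<le> \<Phi> x = g x powr a + \<eta> * \<delta>\<close>.
  Let \<open>\<delta> \<rightarrow> 0\<close> and raise to the power \<open>p\<close>.
\<close>

lemma powr_le_tangent:
  fixes a t t0 :: real
  assumes "0 < a" "a < 1" "0 \<le> t" "0 < t0"
  shows "t powr a \<le> t0 powr a + a * t0 powr (a - 1) * (t - t0)"
proof (cases "t = 0")
  case True
  have "t0 powr a = t0 powr (a - 1) * t0"
    using assms by (simp add: powr_diff)
  then show ?thesis using True assms by (simp add: algebra_simps)
next
  case False
  then have "t powr a * t0 powr (1 - a) \<le> a * t + (1 - a) * t0"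
    using Youngs_inequality_0[of a "1 - a" t t0] assms by simp
  then show ?thesis
    using assms by (simp add: powr_diff field_simps)
qed

lemma sqrt_le_tangent:
  fixes u u0 :: real
  assumes "0 < u0" "0 \<le> u"
  shows "sqrt u \<le> sqrt u0 + (u - u0) / (2 * sqrt u0)"
proof -
  have "2 * sqrt u0 * sqrt u \<le> u + u0"
    using assms sum_squares_bound[of "sqrt u0" "sqrt u"] by (simp add: power2_eq_square)
  moreover have "sqrt u0 + (u - u0) / (2 * sqrt u0) = (u + u0) / (2 * sqrt u0)"
    using assms by (simp add: field_simps)
  ultimately show ?thesis
    using assms by (simp add: pos_le_divide_eq mult_ac)
qed

lemma frechet_subdiffI_quadratic:
  fixes g :: "'a::euclidean_space \<Rightarrow> real"
  assumes "\<forall>\<^sub>F z in at y. g z - g y - inner v (z - y) \<ge> - L * (norm (z - y))\<^sup>2"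
  shows "v \<in> frechet_subdiff g y"
proof -
  have "\<forall>\<^sub>F z in at y. ereal (- L * norm (z - y))
          \<le> ereal ((g z - g y - inner v (z - y)) / norm (z - y))"
    using eventually_conj[OF assms eventually_neq_at_within[of y y UNIV]]
    by eventually_elim (auto simp: pos_le_divide_eq power2_eq_square)
  then have "Liminf (at y) (\<lambda>z. ereal (- L * norm (z - y)))
      \<le> Liminf (at y) (\<lambda>z. ereal ((g z - g y - inner v (z - y)) / norm (z - y)))"
    by (rule Liminf_mono)
  moreover have "Liminf (at y) (\<lambda>z. ereal (- L * norm (z - y))) = 0"
    by (rule lim_imp_Liminf) (auto intro!: tendsto_eq_intros)
  ultimately show ?thesis
    by (simp add: frechet_subdiff_def)
qed

lemma frechet_subdiff_diff_const:
  "frechet_subdiff (\<lambda>z. g z - c) x = frechet_subdiff g x"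
  by (simp add: frechet_subdiff_def)

lemma frechet_subdiff_subset_limiting_subdiff:
  "frechet_subdiff g x \<subseteq> limiting_subdiff g x"
proof
  fix v assume "v \<in> frechet_subdiff g x"
  then show "v \<in> limiting_subdiff g x"
    unfolding limiting_subdiff_def
    by (intro CollectI exI[of _ "\<lambda>n. x"] exI[of _ "\<lambda>n. v"]) auto
qed

lemma smoothed_norm_le_quadratic:
  fixes x y z :: "'a::real_inner"
  assumes "\<delta> > 0"
  defines "s \<equiv> \<lambda>z. sqrt ((norm (z - x))\<^sup>2 + \<delta>\<^sup>2)"
  shows "s z \<le> s y + inner (y - x) (z - y) / s y + (norm (z - y))\<^sup>2 / (2 * s y)"
proof -
  have "(norm (z - x))\<^sup>2 = (norm (y - x))\<^sup>2 + 2 * inner (y - x) (z - y) + (norm (z - y))\<^sup>2"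
    using dot_norm[of "y - x" "z - y"] by simp
  moreover have "s z \<le> s y + ((norm (z - x))\<^sup>2 - (norm (y - x))\<^sup>2) / (2 * s y)"
    unfolding s_def using assms
    by (intro sqrt_le_tangent[of "(norm (y - x))\<^sup>2 + \<delta>\<^sup>2", THEN order_trans])
      (auto intro: add_nonneg_pos)
  ultimately show ?thesis
    by (simp add: add_divide_distrib)
qed

lemma continuous_attains_inf_coercive:
  fixes h :: "'a::heine_borel \<Rightarrow> real"
  assumes "continuous_on UNIV h" "c > 0" "\<And>z. c * dist z x \<le> h z"
  obtains y where "\<And>z. h y \<le> h z"
proof -
  define R where "R = h x / c"
  have "x \<in> cball x R"
    using assms(2) assms(3)[of x] by (simp add: R_def)
  then obtain y where "y \<in> cball x R" and ymin: "\<And>z. z \<in> cball x R \<Longrightarrow> h y \<le> h z"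
    using continuous_attains_inf[OF compact_cball _ continuous_on_subset[OF assms(1)]] by blast
  have "h y \<le> h z" for z
  proof (cases "z \<in> cball x R")
    case False
    then have "h x < c * dist z x"
      using assms(2) by (auto simp: R_def dist_commute field_simps)
    then show ?thesis
      using assms(3)[of z] ymin[OF \<open>x \<in> cball x R\<close>] by linarith
  qed (rule ymin)
  then show thesis by (rule that)
qed

lemma frechet_subgradient_at_penalized_min:
  fixes g :: "'a::euclidean_space \<Rightarrow> real" and x :: 'a and \<delta> :: real
  defines "s \<equiv> \<lambda>z. sqrt ((norm (z - x))\<^sup>2 + \<delta>\<^sup>2)"
  assumes "\<And>z. g z \<ge> 0" "0 < a" "a < 1" "\<eta> > 0" "\<delta> > 0" "g y > 0"
    and min: "\<And>z. g y powr a + \<eta> * s y \<le> g z powr a + \<eta> * s z"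
  shows "\<exists>v \<in> frechet_subdiff g y. a * g y powr (a - 1) * norm v < \<eta>"
proof
  define c where "c = a * g y powr (a - 1)"
  have "c > 0"
    using assms by (simp add: c_def)
  have "s y > 0" "norm (y - x) < s y"
    using \<open>\<delta> > 0\<close> by (auto simp: s_def intro: real_less_rsqrt add_nonneg_pos)
  \<comment> \<open>\<open>- v\<close> is the gradient of \<open>\<eta> * s / c\<close> at \<open>y\<close>\<close>
  define v where "v = - (\<eta> / (c * s y)) *\<^sub>R (y - x)"
  have "c * norm v = \<eta> * (norm (y - x) / s y)"
    using \<open>c > 0\<close> \<open>s y > 0\<close> \<open>\<eta> > 0\<close> by (simp add: v_def)
  also have "\<dots> < \<eta>"
    using \<open>s y > 0\<close> \<open>\<eta> > 0\<close> \<open>norm (y - x) < s y\<close> by (simp add: pos_divide_less_eq)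
  finally show "c * norm v < \<eta>" .
  have "g z - g y - inner v (z - y) \<ge> - (\<eta> / (2 * c * s y)) * (norm (z - y))\<^sup>2" for z
  proof -
    have "c * (g y - g z) \<le> g y powr a - g z powr a"
      using powr_le_tangent[of a "g z" "g y"] assms by (simp add: c_def algebra_simps)
    also have "\<dots> \<le> \<eta> * (s z - s y)"
      using min[of z] by (simp add: algebra_simps)
    also have "\<dots> \<le> \<eta> * (inner (y - x) (z - y) / s y + (norm (z - y))\<^sup>2 / (2 * s y))"
      using smoothed_norm_le_quadratic[OF \<open>\<delta> > 0\<close>, where x=x and y=y and z=z] \<open>\<eta> > 0\<close>
      by (simp add: s_def)
    finally have "g y - g z \<le> \<eta> / (c * s y) * inner (y - x) (z - y)
        + \<eta> / (2 * c * s y) * (norm (z - y))\<^sup>2"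
      using \<open>c > 0\<close> \<open>s y > 0\<close> by (simp add: field_simps)
    moreover have "inner v (z - y) = - (\<eta> / (c * s y)) * inner (y - x) (z - y)"
      by (simp add: v_def)
    ultimately show ?thesis
      by linarith
  qed
  then show "v \<in> frechet_subdiff g y"
    by (intro frechet_subdiffI_quadratic always_eventually) blast
qed

lemma infdist_zero_set_le_powr_plus:
  fixes g :: "'a::euclidean_space \<Rightarrow> real"
  assumes "continuous_on UNIV g" "\<And>z. g z \<ge> 0" "0 < a" "a < 1" "\<eta> > 0" "\<delta> > 0"
    and slope: "\<And>y v. g y > 0 \<Longrightarrow> v \<in> frechet_subdiff g y \<Longrightarrow>
      \<eta> \<le> a * g y powr (a - 1) * norm v"
  shows "infdist x {z. g z = 0} \<le> g x powr a / \<eta> + \<delta>"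
proof -
  define s where "s z = sqrt ((norm (z - x))\<^sup>2 + \<delta>\<^sup>2)" for z
  define \<Phi> where "\<Phi> z = g z powr a + \<eta> * s z" for z
  have s_ge: "dist z x \<le> s z" for z
    unfolding s_def dist_norm by (rule real_le_rsqrt) simp
  have "continuous_on UNIV \<Phi>"
    unfolding \<Phi>_def s_def using assms(1-3)
    by (intro continuous_intros continuous_on_powr') auto
  moreover have "\<eta> * dist z x \<le> \<Phi> z" for z
    using s_ge[of z] \<open>\<eta> > 0\<close> by (simp add: \<Phi>_def add_increasing)
  ultimately obtain y where min: "\<And>z. \<Phi> y \<le> \<Phi> z"
    using continuous_attains_inf_coercive[OF _ \<open>\<eta> > 0\<close>] by metis
  have "g y = 0"
  proof (rule ccontr)
    assume "g y \<noteq> 0"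
    then have "g y > 0"
      using assms(2) by (simp add: order_less_le)
    then obtain v where "v \<in> frechet_subdiff g y" "a * g y powr (a - 1) * norm v < \<eta>"
      using frechet_subgradient_at_penalized_min[OF assms(2-6) \<open>g y > 0\<close> min[unfolded \<Phi>_def s_def]]
      by blast
    then show False
      using slope[OF \<open>g y > 0\<close>] by fastforce
  qed
  have "infdist x {z. g z = 0} \<le> dist y x"
    using \<open>g y = 0\<close> by (simp add: infdist_le dist_commute)
  also have "\<dots> \<le> \<Phi> y / \<eta>"
    using s_ge[of y] \<open>g y = 0\<close> \<open>\<eta> > 0\<close> by (simp add: \<Phi>_def)
  also have "\<dots> \<le> \<Phi> x / \<eta>"
    using min[of x] \<open>\<eta> > 0\<close> by (simp add: divide_right_mono)
  also have "\<dots> = g x powr a / \<eta> + \<delta>"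
    using \<open>\<eta> > 0\<close> \<open>\<delta> > 0\<close> by (simp add: \<Phi>_def s_def add_divide_distrib)
  finally show ?thesis .
qed

lemma infdist_zero_set_le_powr:
  fixes g :: "'a::euclidean_space \<Rightarrow> real"
  assumes "continuous_on UNIV g" "\<And>z. g z \<ge> 0" "0 < a" "a < 1" "\<eta> > 0"
    and "\<And>y v. g y > 0 \<Longrightarrow> v \<in> frechet_subdiff g y \<Longrightarrow>
      \<eta> \<le> a * g y powr (a - 1) * norm v"
  shows "infdist x {z. g z = 0} \<le> g x powr a / \<eta>"
  using infdist_zero_set_le_powr_plus[OF assms(1-5) _ assms(6)] by (rule field_le_epsilon)

lemma infdist_zero_set_powr_le:
  fixes g :: "'a::euclidean_space \<Rightarrow> real"
  assumes "continuous_on UNIV g" "\<And>z. g z \<ge> 0" "p > 1" "\<eta> > 0"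
    and "\<And>y v. g y > 0 \<Longrightarrow> v \<in> frechet_subdiff g y \<Longrightarrow>
      \<eta> \<le> 1 / p * g y powr (1 / p - 1) * norm v"
  shows "\<eta> powr p * infdist x {z. g z = 0} powr p \<le> g x"
proof -
  have "infdist x {z. g z = 0} \<le> g x powr (1 / p) / \<eta>"
    using assms by (intro infdist_zero_set_le_powr) auto
  then have "infdist x {z. g z = 0} powr p \<le> (g x powr (1 / p) / \<eta>) powr p"
    using \<open>p > 1\<close> by (intro powr_mono2) (auto simp: infdist_nonneg)
  also have "\<dots> = g x / \<eta> powr p"
    using assms(2)[of x] \<open>p > 1\<close> \<open>\<eta> > 0\<close> by (simp add: powr_divide powr_powr)
  finally show ?thesis
    using \<open>\<eta> > 0\<close> by (simp add: field_simps)
qed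

lemma conjugate_exponent_eq:
  fixes p q :: real
  assumes "p > 1" "1 / p + 1 / q = 1"
  shows "q = p / (p - 1)"
proof -
  have "1 / q = (p - 1) / p"
    using assms by (simp add: diff_divide_distrib eq_diff_eq')
  then have "1 / (1 / q) = p / (p - 1)"
    by simp
  then show ?thesis
    by simp
qed

lemma lojasiewicz_imp_powr_slope_bound:
  fixes p q \<mu> t s :: real
  assumes "p > 1" "1 / p + 1 / q = 1" "\<mu> > 0" "t > 0" "s \<ge> 0"
    and "t \<le> 1 / (q * \<mu> powr (q / p)) * s powr q"
  shows "q powr (1 / q) * \<mu> powr (1 / p) / p \<le> 1 / p * t powr (1 / p - 1) * s"
proof -
  have "q > 0"
    using conjugate_exponent_eq[OF assms(1,2)] assms(1) by simp
  have "1 / p - 1 = - (1 / q)"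
    using assms(2) by linarith
  then have t_powr: "t powr (1 / p - 1) = 1 / t powr (1 / q)"
    by (simp only: powr_minus_divide)
  have "q * \<mu> powr (q / p) * t \<le> s powr q"
    using assms(6) \<open>q > 0\<close> \<open>\<mu> > 0\<close> by (simp add: field_simps)
  then have "(q * \<mu> powr (q / p) * t) powr (1 / q) \<le> (s powr q) powr (1 / q)"
    using \<open>q > 0\<close> \<open>\<mu> > 0\<close> \<open>t > 0\<close> by (intro powr_mono2) auto
  then have "q powr (1 / q) * \<mu> powr (1 / p) * t powr (1 / q) \<le> s"
    using \<open>q > 0\<close> \<open>\<mu> > 0\<close> \<open>t > 0\<close> \<open>s \<ge> 0\<close> by (simp add: powr_mult powr_powr)
  then have "q powr (1 / q) * \<mu> powr (1 / p) / p \<le> s / t powr (1 / q) / p"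
    using \<open>t > 0\<close> \<open>p > 1\<close> by (intro divide_right_mono) (auto simp: pos_le_divide_eq)
  then show ?thesis
    using t_powr by (simp add: mult.commute)
qed

lemma lojasiewicz_constant_powr:
  fixes p q \<mu> :: real
  assumes "p > 1" "1 / p + 1 / q = 1" "\<mu> > 0"
  shows "(q powr (1 / q) * \<mu> powr (1 / p) / p) powr p = 1 / (p - 1) powr (p - 1) * (\<mu> / p)"
proof -
  have q: "q = p / (p - 1)"
    using conjugate_exponent_eq[OF assms(1,2)] .
  have "(q powr (1 / q) * \<mu> powr (1 / p) / p) powr p = q powr (p - 1) * \<mu> / p powr p"
    using assms q by (simp add: powr_mult powr_divide powr_powr)
  also have "q powr (p - 1) = p powr (p - 1) / (p - 1) powr (p - 1)"
    using assms q by (simp add: powr_divide)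
  also have "p powr p = p powr (p - 1) * p"
    using assms by (simp add: powr_diff)
  finally show ?thesis
    using assms by simp
qed

theorem theorem3:
  fixes f :: "'a::euclidean_space \<Rightarrow> real" and p q \<mu> :: real
  assumes "continuous_on UNIV f"
    and "argmin_set f \<noteq> {}"
    and "p > 1" and "\<mu> > 0"
    and "1 / p + 1 / q = 1"
    and "\<And>x xs. xs \<in> limiting_subdiff f x \<Longrightarrow>
           f x - (INF y. f y) \<le> 1 / (q * \<mu> powr (q / p)) * norm xs powr q"
  shows "\<And>x. 1 / (p - 1) powr (p - 1) * (\<mu> / p) * infdist x (argmin_set f) powr p
            \<le> f x - (INF y. f y)"
proof -
  fix x
  obtain m where m: "m \<in> argmin_set f"
    using assms(2) by blast
  then have inf: "(INF y. f y) = f m"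
    by (intro cInf_eq_minimum) (auto simp: argmin_set_def)
  define g where "g = (\<lambda>z. f z - f m)"
  define \<eta> where "\<eta> = q powr (1 / q) * \<mu> powr (1 / p) / p"
  have argmin: "argmin_set f = {z. g z = 0}"
    using m unfolding argmin_set_def g_def by (auto intro: order.antisym)
  have "\<eta> > 0"
    using conjugate_exponent_eq[OF assms(3,5)] assms(3,4) by (simp add: \<eta>_def)
  have slope: "\<eta> \<le> 1 / p * g y powr (1 / p - 1) * norm v"
    if "g y > 0" "v \<in> frechet_subdiff g y" for y v
  proof -
    have "v \<in> limiting_subdiff f y"
      using that(2) frechet_subdiff_subset_limiting_subdiff
      by (auto simp: g_def frechet_subdiff_diff_const)
    then show ?thesis
      unfolding \<eta>_def using assms(3-6) that(1)
      by (intro lojasiewicz_imp_powr_slope_bound) (auto simp: inf g_def)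
  qed
  have "\<eta> powr p * infdist x {z. g z = 0} powr p \<le> g x"
    by (rule infdist_zero_set_powr_le[OF _ _ assms(3) \<open>\<eta> > 0\<close> slope])
      (use m assms(1) in \<open>auto simp: g_def argmin_set_def intro!: continuous_intros\<close>)
  then show "1 / (p - 1) powr (p - 1) * (\<mu> / p) * infdist x (argmin_set f) powr p
      \<le> f x - (INF y. f y)"
    unfolding argmin inf
    by (simp add: lojasiewicz_constant_powr[OF assms(3,5,4), folded \<eta>_def] g_def)
qed

end
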